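(* Let $(X,d^\star)$ be a $\star$-metric space and $M\subseteq X$ a nonempty subset. Then $(M,d^\star|_{M\times M})$ is totally bounded if and only if $(\overline{M},d^\star|_{\overline{M}\times\overline{M}})$ is totally bounded, where $\overline{M}$ is the closure of $M$ in $(X,\mathscr{T}_{d^\star})$.
   Context: A $t$-definer is a function $\star:[0,\infty)\times[0,\infty)\to[0,\infty)$ such that for all $a,b,c\ge 0$: $a\star b=b\star a$; $a\star(b\star c)=(a\star b)\star c$; if $a\le b$ then $a\star c\le b\star c$; $a\star 0=a$; and $\star$ is continuous in its first variable with respect to the Euclidean topology. Given a nonempty set $X$ and a $t$-definer $\star$, a $\star$-metric on $X$ is a function $d^\star:X\times X\to[0,\infty)$ such that for all $x,y,z\in X$: $d^\star(x,y)=0$ iff $x=y$; $d^\star(x,y)=d^\star(y,x)$; and $d^\star(x,y)\le d^\star(x,z)\star d^\star(z,y)$; $(X,d^\star)$ is a $\star$-metric space. Put $B_{d^\star}(a,r)=\{x\in X: d^\star(a,x)<r\}$ and let $\mathscr{T}_{d^\star}$ be the topology consisting of all $U\subseteq X$ such that for each $a\in U$ some $B_{d^\star}(a,r)$, $r>0$, is contained in $U$. A $\star$-metric space $(Y,\rho)$ is totally bounded if for every $\epsilon>0$ there is a finite set $F\subseteq Y$ with $Y=\bigcup_{x\in F}\{y\in Y:\rho(x,y)<\epsilon\}$. *)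

theory Defs
  imports "HOL-Analysis.Analysis"
begin

text \<open>A t-definer: a binary operation on [0,\<infinity>), represented as a real function
  whose relevant behaviour is on nonnegative arguments.\<close>
definition t_definer :: "(real \<Rightarrow> real \<Rightarrow> real) \<Rightarrow> bool" where
  "t_definer st \<longleftrightarrow>
     (\<forall>a\<ge>0. \<forall>b\<ge>0. st a b \<ge> 0) \<and>
     (\<forall>a\<ge>0. \<forall>b\<ge>0. st a b = st b a) \<and>
     (\<forall>a\<ge>0. \<forall>b\<ge>0. \<forall>c\<ge>0. st a (st b c) = st (st a b) c) \<and>
     (\<forall>a\<ge>0. \<forall>b\<ge>0. \<forall>c\<ge>0. a \<le> b \<longrightarrow> st a c \<le> st b c) \<and>
     (\<forall>a\<ge>0. st a 0 = a) \<and>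
     (\<forall>c\<ge>0. continuous_on {0..} (\<lambda>a. st a c))"

definition star_metric :: "(real \<Rightarrow> real \<Rightarrow> real) \<Rightarrow> 'a set \<Rightarrow> ('a \<Rightarrow> 'a \<Rightarrow> real) \<Rightarrow> bool" where
  "star_metric st X d \<longleftrightarrow>
     (\<forall>x\<in>X. \<forall>y\<in>X. d x y \<ge> 0) \<and>
     (\<forall>x\<in>X. \<forall>y\<in>X. d x y = 0 \<longleftrightarrow> x = y) \<and>
     (\<forall>x\<in>X. \<forall>y\<in>X. d x y = d y x) \<and>
     (\<forall>x\<in>X. \<forall>y\<in>X. \<forall>z\<in>X. d x y \<le> st (d x z) (d z y))"

definition star_ball :: "'a set \<Rightarrow> ('a \<Rightarrow> 'a \<Rightarrow> real) \<Rightarrow> 'a \<Rightarrow> real \<Rightarrow> 'a set" where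
  "star_ball X d a r = {x \<in> X. d a x < r}"

definition star_topology :: "'a set \<Rightarrow> ('a \<Rightarrow> 'a \<Rightarrow> real) \<Rightarrow> 'a topology" where
  "star_topology X d = topology (\<lambda>U. U \<subseteq> X \<and> (\<forall>a\<in>U. \<exists>r>0. star_ball X d a r \<subseteq> U))"

definition star_totally_bounded :: "'a set \<Rightarrow> ('a \<Rightarrow> 'a \<Rightarrow> real) \<Rightarrow> bool" where
  "star_totally_bounded Y d \<longleftrightarrow>
     (\<forall>\<epsilon>>0. \<exists>F. finite F \<and> F \<subseteq> Y \<and> Y = (\<Union>x\<in>F. {y \<in> Y. d x y < \<epsilon>}))"

end

theory Submission
  imports Defs
begin

text \<open>Since \<open>st 0 c = c\<close> and \<open>st\<close> is continuous in its first argument, \<open>d x z < \<delta>\<close> and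
  \<open>d z y < \<delta>\<close> force \<open>d x y < \<epsilon>\<close> once \<open>\<delta>\<close> is small, and every star-ball contains a star-ball
  around each of its points. So star-balls are open, and each point of the closure of M lies
  arbitrarily close to M. A finite \<open>\<delta>\<close>-net of either M or its closure then yields an
  \<open>\<epsilon>\<close>-net of the other, after moving each net point to a nearby point of the other set.\<close>

lemma t_definerD:
  assumes "t_definer st"
  shows t_definer_commute: "\<And>a b. 0 \<le> a \<Longrightarrow> 0 \<le> b \<Longrightarrow> st a b = st b a"
    and t_definer_mono: "\<And>a b c. 0 \<le> a \<Longrightarrow> 0 \<le> b \<Longrightarrow> 0 \<le> c \<Longrightarrow> a \<le> b \<Longrightarrow> st a c \<le> st b c"
    and t_definer_zero: "\<And>a. 0 \<le> a \<Longrightarrow> st a 0 = a"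
    and t_definer_continuous: "\<And>c. 0 \<le> c \<Longrightarrow> continuous_on {0..} (\<lambda>a. st a c)"
  using assms unfolding t_definer_def by simp_all

lemma star_metricD:
  assumes "star_metric st X d"
  shows star_metric_nonneg: "\<And>x y. x \<in> X \<Longrightarrow> y \<in> X \<Longrightarrow> 0 \<le> d x y"
    and star_metric_self: "\<And>x. x \<in> X \<Longrightarrow> d x x = 0"
    and star_metric_commute: "\<And>x y. x \<in> X \<Longrightarrow> y \<in> X \<Longrightarrow> d x y = d y x"
    and star_metric_triangle: "\<And>x y z. x \<in> X \<Longrightarrow> y \<in> X \<Longrightarrow> z \<in> X \<Longrightarrow> d x y \<le> st (d x z) (d z y)"
  using assms unfolding star_metric_def by metis+

lemma t_definer_mono2:
  assumes T: "t_definer st" and "0 \<le> a" "0 \<le> c" "a \<le> b" "c \<le> e"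
  shows "st a c \<le> st b e"
proof -
  have "0 \<le> b" "0 \<le> e" using assms by linarith+
  have "st a c \<le> st b c" by (rule t_definer_mono[OF T]) fact+
  also have "\<dots> = st c b" by (rule t_definer_commute[OF T]) fact+
  also have "\<dots> \<le> st e b" by (rule t_definer_mono[OF T]) fact+
  also have "\<dots> = st b e" by (rule t_definer_commute[OF T]) fact+
  finally show ?thesis .
qed

lemma t_definer_exists_pos_less:
  assumes T: "t_definer st" and "0 \<le> c" "c < e"
  shows "\<exists>r>0. st r c < e"
proof -
  have "((\<lambda>a. st a c) \<longlongrightarrow> st 0 c) (at 0 within {0..})"
    using t_definer_continuous[OF T \<open>0 \<le> c\<close>] by (simp add: continuous_on_def)
  then have "((\<lambda>a. st a c) \<longlongrightarrow> st 0 c) (at_right 0)"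
    by (rule tendsto_within_subset) auto
  moreover have "st 0 c = c"
    using t_definer_commute[OF T, of 0 c] t_definer_zero[OF T] \<open>0 \<le> c\<close> by simp
  ultimately have "\<forall>\<^sub>F a in at_right 0. st a c < e"
    using \<open>c < e\<close> by (simp add: order_tendstoD(2))
  then obtain b :: real where "b > 0" "\<forall>a>0. a < b \<longrightarrow> st a c < e"
    by (auto simp: eventually_at_right_field)
  then show ?thesis by (intro exI[of _ "b/2"]) auto
qed

lemma star_metric_uniform_triangle:
  assumes T: "t_definer st" and D: "star_metric st X d" and "e > 0"
  obtains \<delta> where "\<delta> > 0"
    and "\<And>x y z. x \<in> X \<Longrightarrow> y \<in> X \<Longrightarrow> z \<in> X \<Longrightarrow> d x z < \<delta> \<Longrightarrow> d z y < \<delta> \<Longrightarrow> d x y < e"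
proof -
  obtain r where r: "r > 0" "st r (e/2) < e"
    using t_definer_exists_pos_less[OF T, of "e/2" e] \<open>e > 0\<close> by auto
  show thesis
  proof
    show "min r (e/2) > 0" using r \<open>e > 0\<close> by simp
    fix x y z assume X: "x \<in> X" "y \<in> X" "z \<in> X"
      and close: "d x z < min r (e/2)" "d z y < min r (e/2)"
    have "d x y \<le> st (d x z) (d z y)" using star_metric_triangle[OF D X] .
    also have "\<dots> \<le> st r (e/2)"
      using close by (intro t_definer_mono2[OF T] star_metric_nonneg[OF D] X) simp_all
    finally show "d x y < e" using r by simp
  qed
qed

lemma openin_star_topology:
  "openin (star_topology X d) U \<longleftrightarrow> U \<subseteq> X \<and> (\<forall>a\<in>U. \<exists>r>0. star_ball X d a r \<subseteq> U)"
proof -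
  have "istopology (\<lambda>U. U \<subseteq> X \<and> (\<forall>a\<in>U. \<exists>r>0. star_ball X d a r \<subseteq> U))"
    unfolding istopology_def
  proof (intro conjI allI impI ballI)
    fix S T a
    assume "S \<subseteq> X \<and> (\<forall>a\<in>S. \<exists>r>0. star_ball X d a r \<subseteq> S)"
      and "T \<subseteq> X \<and> (\<forall>a\<in>T. \<exists>r>0. star_ball X d a r \<subseteq> T)" and "a \<in> S \<inter> T"
    then obtain r s where "r > 0" "star_ball X d a r \<subseteq> S" "s > 0" "star_ball X d a s \<subseteq> T"
      by blast
    then show "\<exists>r>0. star_ball X d a r \<subseteq> S \<inter> T"
      by (intro exI[of _ "min r s"]) (auto simp: star_ball_def)
  next
    fix K a
    assume "\<forall>S\<in>K. S \<subseteq> X \<and> (\<forall>a\<in>S. \<exists>r>0. star_ball X d a r \<subseteq> S)" and "a \<in> \<Union>K"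
    then obtain S r where "S \<in> K" "r > 0" "star_ball X d a r \<subseteq> S"
      by blast
    then show "\<exists>r>0. star_ball X d a r \<subseteq> \<Union>K" by blast
  qed auto
  then show ?thesis unfolding star_topology_def by simp
qed

lemma topspace_star_topology: "topspace (star_topology X d) = X"
proof -
  have "openin (star_topology X d) X"
    unfolding openin_star_topology by (auto simp: star_ball_def intro: exI[of _ 1])
  then have "X \<subseteq> topspace (star_topology X d)" by (rule openin_subset)
  moreover have "topspace (star_topology X d) \<subseteq> X"
    unfolding topspace_def openin_star_topology by auto
  ultimately show ?thesis by auto
qed

lemma openin_star_ball:
  assumes T: "t_definer st" and D: "star_metric st X d" and y: "y \<in> X"
  shows "openin (star_topology X d) (star_ball X d y \<delta>)"
  unfolding openin_star_topology
proof (intro conjI ballI)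
  show "star_ball X d y \<delta> \<subseteq> X" by (auto simp: star_ball_def)
  fix a assume "a \<in> star_ball X d y \<delta>"
  then have a: "a \<in> X" "d y a < \<delta>" by (auto simp: star_ball_def)
  obtain r where r: "r > 0" "st r (d y a) < \<delta>"
    using t_definer_exists_pos_less[OF T star_metric_nonneg[OF D y a(1)] a(2)] by auto
  have "star_ball X d a r \<subseteq> star_ball X d y \<delta>"
  proof
    fix z assume "z \<in> star_ball X d a r"
    then have z: "z \<in> X" "d a z < r" by (auto simp: star_ball_def)
    have "d y z \<le> st (d y a) (d a z)" using star_metric_triangle[OF D y z(1) a(1)] .
    also have "\<dots> = st (d a z) (d y a)"
      by (intro t_definer_commute[OF T] star_metric_nonneg[OF D] a(1) y z(1))
    also have "\<dots> \<le> st r (d y a)"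
      using z(2) r(1) by (intro t_definer_mono[OF T] star_metric_nonneg[OF D] a(1) y z(1)) simp_all
    finally show "z \<in> star_ball X d y \<delta>" using r z by (auto simp: star_ball_def)
  qed
  then show "\<exists>r>0. star_ball X d a r \<subseteq> star_ball X d y \<delta>" using r(1) by blast
qed

lemma closure_of_star_topology_approx:
  assumes T: "t_definer st" and D: "star_metric st X d"
    and y: "y \<in> star_topology X d closure_of M" and "\<delta> > 0"
  shows "\<exists>m\<in>M. d m y < \<delta>"
proof -
  have yX: "y \<in> X"
    using y closure_of_subset_topspace topspace_star_topology by fastforce
  have "y \<in> star_ball X d y \<delta>"
    using yX \<open>\<delta> > 0\<close> star_metric_self[OF D] by (simp add: star_ball_def)
  then obtain m where "m \<in> M" "m \<in> star_ball X d y \<delta>"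
    using y openin_star_ball[OF T D yX] unfolding closure_of_def by blast
  then show ?thesis
    using yX star_metric_commute[OF D] by (auto simp: star_ball_def)
qed

lemma star_totally_bounded_iff_cover:
  "star_totally_bounded Y d \<longleftrightarrow>
     (\<forall>\<epsilon>>0. \<exists>F. finite F \<and> F \<subseteq> Y \<and> Y \<subseteq> (\<Union>x\<in>F. {y \<in> Y. d x y < \<epsilon>}))"
proof -
  have "Y = (\<Union>x\<in>F. {y \<in> Y. d x y < \<epsilon>}) \<longleftrightarrow> Y \<subseteq> (\<Union>x\<in>F. {y \<in> Y. d x y < \<epsilon>})"
    for F \<epsilon>
    unfolding set_eq_subset by blast
  then show ?thesis unfolding star_totally_bounded_def by simp
qed

lemma star_totally_bounded_approx:
  assumes T: "t_definer st" and D: "star_metric st X d"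
    and "A \<subseteq> X" and "B \<subseteq> X" and bounded: "star_totally_bounded A d"
    and approx: "\<And>b \<delta>. b \<in> B \<Longrightarrow> \<delta> > 0 \<Longrightarrow> \<exists>a\<in>A. d a b < \<delta>"
  shows "star_totally_bounded B d"
  unfolding star_totally_bounded_iff_cover
proof (intro allI impI)
  fix e :: real assume "e > 0"
  obtain \<delta> where "\<delta> > 0" and close_e:
    "\<And>x y z. x \<in> X \<Longrightarrow> y \<in> X \<Longrightarrow> z \<in> X \<Longrightarrow> d x z < \<delta> \<Longrightarrow> d z y < \<delta> \<Longrightarrow> d x y < e"
    using star_metric_uniform_triangle[OF T D \<open>e > 0\<close>] by metis
  obtain \<eta> where "\<eta> > 0" and close_\<delta>:
    "\<And>x y z. x \<in> X \<Longrightarrow> y \<in> X \<Longrightarrow> z \<in> X \<Longrightarrow> d x z < \<eta> \<Longrightarrow> d z y < \<eta> \<Longrightarrow> d x y < \<delta>"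
    using star_metric_uniform_triangle[OF T D \<open>\<delta> > 0\<close>] by metis
  obtain F where "finite F" "F \<subseteq> A" and cover: "A \<subseteq> (\<Union>x\<in>F. {y \<in> A. d x y < \<eta>})"
    using bounded \<open>\<eta> > 0\<close> unfolding star_totally_bounded_iff_cover by meson
  \<comment> \<open>Only net points near B can be moved into B, but every point of B is near one of them.\<close>
  define F' where "F' = {x \<in> F. \<exists>b\<in>B. d x b < \<delta>}"
  have "\<forall>x\<in>F'. \<exists>b. b \<in> B \<and> d x b < \<delta>" unfolding F'_def by blast
  then obtain g where g: "\<forall>x\<in>F'. g x \<in> B \<and> d x (g x) < \<delta>" using bchoice by meson
  have "B \<subseteq> (\<Union>x\<in>g ` F'. {y \<in> B. d x y < e})"
  proof
    fix y assume "y \<in> B"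
    then obtain a where "a \<in> A" "d a y < \<eta>" using approx \<open>\<eta> > 0\<close> by blast
    then obtain x where "x \<in> F" "d x a < \<eta>" using cover by blast
    have in_X: "x \<in> X" "y \<in> X" "a \<in> X"
      using \<open>x \<in> F\<close> \<open>F \<subseteq> A\<close> \<open>y \<in> B\<close> \<open>a \<in> A\<close> \<open>A \<subseteq> X\<close> \<open>B \<subseteq> X\<close> by auto
    have "d x y < \<delta>" by (rule close_\<delta>) fact+
    then have "x \<in> F'" using \<open>x \<in> F\<close> \<open>y \<in> B\<close> unfolding F'_def by blast
    then have "g x \<in> B" "d x (g x) < \<delta>" using g by auto
    then have "g x \<in> X" "d (g x) x < \<delta>"
      using \<open>B \<subseteq> X\<close> star_metric_commute[OF D] in_X(1) by auto
    then have "d (g x) y < e" using close_e in_X \<open>d x y < \<delta>\<close> by blast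
    then show "y \<in> (\<Union>x\<in>g ` F'. {y \<in> B. d x y < e})"
      using \<open>x \<in> F'\<close> \<open>y \<in> B\<close> by blast
  qed
  moreover have "finite (g ` F')" using \<open>finite F\<close> unfolding F'_def by simp
  moreover have "g ` F' \<subseteq> B" using g by blast
  ultimately show "\<exists>F. finite F \<and> F \<subseteq> B \<and> B \<subseteq> (\<Union>x\<in>F. {y \<in> B. d x y < e})"
    by blast
qed

theorem theorem3p5:
  fixes st :: "real \<Rightarrow> real \<Rightarrow> real" and X M :: "'a set" and d :: "'a \<Rightarrow> 'a \<Rightarrow> real"
  assumes "t_definer st"
    and "star_metric st X d"
    and "M \<subseteq> X" and "M \<noteq> {}"
  shows "star_totally_bounded M d \<longleftrightarrow>
         star_totally_bounded ((star_topology X d) closure_of M) d"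
proof -
  note T = \<open>t_definer st\<close> and D = \<open>star_metric st X d\<close>
  let ?C = "star_topology X d closure_of M"
  have "M \<subseteq> ?C"
    using \<open>M \<subseteq> X\<close> by (simp add: closure_of_subset topspace_star_topology)
  have "?C \<subseteq> X"
    using closure_of_subset_topspace[of "star_topology X d" M] by (simp add: topspace_star_topology)
  show ?thesis
  proof
    assume "star_totally_bounded M d"
    then show "star_totally_bounded ?C d"
      by (rule star_totally_bounded_approx[OF T D \<open>M \<subseteq> X\<close> \<open>?C \<subseteq> X\<close>])
        (rule closure_of_star_topology_approx[OF T D])
  next
    assume "star_totally_bounded ?C d"
    moreover have "\<exists>c\<in>?C. d c m < \<delta>" if "m \<in> M" "\<delta> > 0" for m \<delta>
      using that \<open>M \<subseteq> ?C\<close> \<open>M \<subseteq> X\<close> star_metric_self[OF D] by (intro bexI[of _ m]) auto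
    ultimately show "star_totally_bounded M d"
      by (rule star_totally_bounded_approx[OF T D \<open>?C \<subseteq> X\<close> \<open>M \<subseteq> X\<close>])
  qed
qed

end
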